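(* Let $\alpha\in\mathbb R$ and let $(\phi,\psi)$ be a $q\times q$ Stieltjes pair. Then there is a discrete subset $\mathcal D$ of $\mathbb C\setminus[\alpha,\infty)$ satisfying conditions (i), (ii), (iii) of the definition of a Stieltjes pair and additionally: (iv) $\frac1{\operatorname{Im}z}\operatorname{Im}[\psi(z)^*\phi(z)]$ is positive semidefinite for each $z\in\mathbb C\setminus(\mathbb R\cup\mathcal D)$; (v) $\frac1{\operatorname{Im}z}\operatorname{Im}[(z-\alpha)\psi(z)^*\phi(z)]$ is positive semidefinite for each $z\in\mathbb C\setminus(\mathbb R\cup\mathcal D)$; (vi) $\operatorname{Re}[\psi(z)^*\phi(z)]$ is positive semidefinite for each $z\in\{w\in\mathbb C:\operatorname{Re}w<\alpha\}\setminus\mathcal D$.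
   Context: For a square matrix $A$, $\operatorname{Re}A:=\frac12(A+A^* )$, $\operatorname{Im}A:=\frac1{2i}(A-A^* )$. $J_q:=\begin{pmatrix}0&-iI_q\\ iI_q&0\end{pmatrix}$. A pair $(\phi,\psi)$ of $q\times q$ matrix-valued functions meromorphic in $\mathbb C\setminus[\alpha,\infty)$ is a $q\times q$ Stieltjes pair if there is a discrete subset $\mathcal D$ of $\mathbb C\setminus[\alpha,\infty)$ such that: (i) $\phi,\psi$ are holomorphic in $\mathbb C\setminus([\alpha,\infty)\cup\mathcal D)$; (ii) $\operatorname{rank}\begin{pmatrix}\phi(z)\\\psi(z)\end{pmatrix}=q$ there; (iii) for each $z\in\mathbb C\setminus(\mathbb R\cup\mathcal D)$, $\begin{pmatrix}\phi(z)\\\psi(z)\end{pmatrix}^*\frac{-J_q}{2\operatorname{Im}z}\begin{pmatrix}\phi(z)\\\psi(z)\end{pmatrix}$ and $\begin{pmatrix}(z-\alpha)\phi(z)\\\psi(z)\end{pmatrix}^*\frac{-J_q}{2\operatorname{Im}z}\begin{pmatrix}(z-\alpha)\phi(z)\\\psi(z)\end{pmatrix}$ are positive semidefinite. *)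

theory Defs
  imports "HOL-Complex_Analysis.Complex_Analysis"
begin

text \<open>Square/rectangular complex matrices are rendered as HOL-Analysis Cartesian
  matrices; the size q is the cardinality of the finite index type.\<close>

definition adj :: "complex^'n^'m \<Rightarrow> complex^'m^'n" where
  "adj A = (\<chi> i j. cnj (A $ j $ i))"

definition smat :: "complex \<Rightarrow> complex^'n^'m \<Rightarrow> complex^'n^'m" where
  "smat c A = (\<chi> i j. c * A $ i $ j)"

definition mRe :: "complex^'n^'n \<Rightarrow> complex^'n^'n" where
  "mRe A = smat (1/2) (A + adj A)"

definition mIm :: "complex^'n^'n \<Rightarrow> complex^'n^'n" where
  "mIm A = smat (1/(2*\<i>)) (A - adj A)"

definition psd :: "complex^'n^'n \<Rightarrow> bool" where
  "psd A \<longleftrightarrow> (\<forall>x::complex^'n.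
     (let v = (\<Sum>i\<in>UNIV. \<Sum>j\<in>UNIV. cnj (x $ i) * A $ i $ j * x $ j)
      in v \<in> \<real> \<and> Re v \<ge> 0))"

text \<open>J_q = [[0, -i I_q],[i I_q, 0]] indexed by 'q + 'q (Inl = first block).\<close>
definition Jmat :: "complex^('q::finite + 'q)^('q + 'q)" where
  "Jmat = (\<chi> a b. case (a, b) of
      (Inl i, Inr j) \<Rightarrow> (if i = j then -\<i> else 0)
    | (Inr i, Inl j) \<Rightarrow> (if i = j then \<i> else 0)
    | _ \<Rightarrow> 0)"

definition stack :: "complex^'q^'q \<Rightarrow> complex^'q^'q \<Rightarrow> complex^'q^('q + 'q)" where
  "stack A B = (\<chi> a j. case a of Inl i \<Rightarrow> A $ i $ j | Inr i \<Rightarrow> B $ i $ j)"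

definition slit :: "real \<Rightarrow> complex set" where
  "slit \<alpha> = - {complex_of_real t | t. t \<ge> \<alpha>}"

definition discrete_in :: "complex set \<Rightarrow> complex set \<Rightarrow> bool" where
  "discrete_in D \<Omega> \<longleftrightarrow> D \<subseteq> \<Omega> \<and> D sparse_in \<Omega>"

definition mat_meromorphic_on :: "(complex \<Rightarrow> complex^'n^'m) \<Rightarrow> complex set \<Rightarrow> bool" where
  "mat_meromorphic_on F S \<longleftrightarrow> (\<forall>i j. (\<lambda>z. F z $ i $ j) meromorphic_on S)"

definition mat_holomorphic_on :: "(complex \<Rightarrow> complex^'n^'m) \<Rightarrow> complex set \<Rightarrow> bool" where
  "mat_holomorphic_on F S \<longleftrightarrow> (\<forall>i j. (\<lambda>z. F z $ i $ j) holomorphic_on S)"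

definition stieltjes_conds ::
  "real \<Rightarrow> (complex \<Rightarrow> complex^'q^'q) \<Rightarrow> (complex \<Rightarrow> complex^'q^'q) \<Rightarrow> complex set \<Rightarrow> bool" where
  "stieltjes_conds \<alpha> \<phi> \<psi> D \<longleftrightarrow>
     discrete_in D (slit \<alpha>) \<and>
     mat_holomorphic_on \<phi> (slit \<alpha> - D) \<and> mat_holomorphic_on \<psi> (slit \<alpha> - D) \<and>
     (\<forall>z \<in> slit \<alpha> - D. rank (stack (\<phi> z) (\<psi> z)) = CARD('q)) \<and>
     (\<forall>z. z \<notin> \<real> \<and> z \<notin> D \<longrightarrow>
        psd (smat (1 / complex_of_real (2 * Im z))
               (adj (stack (\<phi> z) (\<psi> z)) ** (- Jmat) ** stack (\<phi> z) (\<psi> z))) \<and>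
        psd (smat (1 / complex_of_real (2 * Im z))
               (adj (stack (smat (z - of_real \<alpha>) (\<phi> z)) (\<psi> z)) ** (- Jmat)
                  ** stack (smat (z - of_real \<alpha>) (\<phi> z)) (\<psi> z))))"

definition stieltjes_pair ::
  "real \<Rightarrow> (complex \<Rightarrow> complex^'q^'q) \<Rightarrow> (complex \<Rightarrow> complex^'q^'q) \<Rightarrow> bool" where
  "stieltjes_pair \<alpha> \<phi> \<psi> \<longleftrightarrow>
     mat_meromorphic_on \<phi> (slit \<alpha>) \<and> mat_meromorphic_on \<psi> (slit \<alpha>) \<and>
     (\<exists>D. stieltjes_conds \<alpha> \<phi> \<psi> D)"

end

theory Submission
  imports Defs
begin

text \<open>Conditions (iv) and (v) are the two inequalities of (iii) in disguise, because for a stacked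
  matrix one has (A; B)^* (-J_q) (A; B) = 2 Im (B^* A). For nonreal z with
  Re z < \<alpha>, put w = z - \<alpha>; then Re M = (1/Im w) Im (w M) + (-Re w) (1/Im w) Im M exhibits
  Re (\<psi>^* \<phi>) as a nonnegative combination of the matrices in (iv) and (v). A real point
  x < \<alpha> outside D has a neighbourhood free of D on which \<phi> and \<psi> are continuous, so (vi)
  passes to x from nearby nonreal points because the cone of positive semidefinite matrices is closed.\<close>

lemma sum_UNIV_Plus:
  fixes f :: "('a::finite + 'b::finite) \<Rightarrow> 'c::comm_monoid_add"
  shows "(\<Sum>a\<in>UNIV. f a) = (\<Sum>i\<in>UNIV. f (Inl i)) + (\<Sum>i\<in>UNIV. f (Inr i))"
  by (simp add: UNIV_Plus_UNIV[symmetric] sum.Plus o_def del: UNIV_Plus_UNIV)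

lemma matrix_matrix_mult_nth:
  "((X::'a::semiring_1^'n^'m) ** (Y::'a^'k^'n)) $ i $ j = (\<Sum>a\<in>UNIV. X $ i $ a * Y $ a $ j)"
  by (simp add: matrix_matrix_mult_def)

lemma smat_smat: "smat a (smat b A) = smat (a * b) A"
  by (simp add: smat_def vec_eq_iff)

lemma matrix_mult_smat: "(X::complex^'n^'m) ** smat c (Y::complex^'k^'n) = smat c (X ** Y)"
  by (simp add: smat_def vec_eq_iff matrix_matrix_mult_nth sum_distrib_left algebra_simps)

lemma adj_matrix_mult: "adj ((X::complex^'n^'m) ** (Y::complex^'k^'n)) = adj Y ** adj X"
  by (simp add: adj_def vec_eq_iff matrix_matrix_mult_nth mult.commute)

lemma adj_adj [simp]: "adj (adj A) = A"
  by (simp add: adj_def vec_eq_iff)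

lemma neg_Jmat_mult_stack: "(- Jmat) ** stack A B = stack (smat \<i> B) (smat (- \<i>) A)"
proof -
  have "((- Jmat) ** stack A B) $ a $ j = stack (smat \<i> B) (smat (- \<i>) A) $ a $ j" for a j
    by (cases a) (simp_all add: matrix_matrix_mult_def Jmat_def stack_def smat_def sum_UNIV_Plus
        if_distrib[of "\<lambda>x. x * _"] sum_negf if_distrib[of uminus] cong: if_cong)
  then show ?thesis by (simp add: vec_eq_iff)
qed

lemma adj_stack_mult_stack: "adj (stack A B) ** stack C D = adj A ** C + adj B ** D"
  by (simp add: vec_eq_iff matrix_matrix_mult_nth sum_UNIV_Plus adj_def stack_def)

lemma adj_stack_Jmat_stack:
  "adj (stack A B) ** (- Jmat) ** stack A B = smat 2 (mIm (adj B ** A))"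
proof -
  have "adj (stack A B) ** (- Jmat) ** stack A B = smat \<i> (adj A ** B) + smat (- \<i>) (adj B ** A)"
    by (simp add: matrix_mul_assoc[symmetric] neg_Jmat_mult_stack adj_stack_mult_stack
        matrix_mult_smat)
  also have "\<dots> = smat 2 (mIm (adj B ** A))"
    by (simp add: mIm_def smat_def adj_matrix_mult vec_eq_iff field_simps)
  finally show ?thesis .
qed

definition quad_form :: "complex^'n^'n \<Rightarrow> complex^'n \<Rightarrow> complex" where
  "quad_form A x = (\<Sum>i\<in>UNIV. \<Sum>j\<in>UNIV. cnj (x $ i) * A $ i $ j * x $ j)"

lemma psd_iff_quad_form: "psd A \<longleftrightarrow> (\<forall>x. Im (quad_form A x) = 0 \<and> Re (quad_form A x) \<ge> 0)"
  by (simp add: psd_def quad_form_def Let_def complex_is_Real_iff)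

lemma quad_form_add: "quad_form (A + B) x = quad_form A x + quad_form B x"
  by (simp add: quad_form_def sum.distrib algebra_simps)

lemma quad_form_smat: "quad_form (smat c A) x = c * quad_form A x"
  by (simp add: quad_form_def smat_def sum_distrib_left algebra_simps)

lemma psd_add: "psd A \<Longrightarrow> psd B \<Longrightarrow> psd (A + B)"
  by (simp add: psd_iff_quad_form quad_form_add)

lemma psd_smat_nonneg: "c \<ge> 0 \<Longrightarrow> psd A \<Longrightarrow> psd (smat (of_real c) A)"
  by (simp add: psd_iff_quad_form quad_form_smat)

lemma continuous_on_quad_form: "continuous_on S (\<lambda>A. quad_form A x)"
  unfolding quad_form_def
  by (intro continuous_at_imp_continuous_on ballI continuous_intros isCont_vec_nth continuous_ident)

lemma closed_psd: "closed {A :: complex^'n^'n. psd A}"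
proof -
  have "{A :: complex^'n^'n. psd A} =
      (\<Inter>x. {A. Im (quad_form A x) = 0} \<inter> {A. 0 \<le> Re (quad_form A x)})"
    by (auto simp: psd_iff_quad_form)
  then show ?thesis
    by (auto intro!: closed_INT closed_Int closed_Collect_eq closed_Collect_le continuous_on_Im
        continuous_on_Re continuous_on_quad_form)
qed

lemma mRe_eq_mIm_combination:
  assumes "Im w \<noteq> 0"
  shows "mRe A = smat (1 / of_real (Im w)) (mIm (smat w A))
                 + smat (of_real (- Re w)) (smat (1 / of_real (Im w)) (mIm A))"
proof -
  have "1/2 * (u + cnj v) = 1 / of_real (Im w) * (1 / (2*\<i>) * (w*u - cnj w * cnj v))
     + of_real (- Re w) * (1 / of_real (Im w) * (1/(2*\<i>) * (u - cnj v)))" for u v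
    using assms by (cases w) (simp add: complex_eq_iff field_simps)
  then show ?thesis
    by (simp add: mRe_def mIm_def smat_def adj_def vec_eq_iff)
qed

lemma psd_mRe_if_psd_mIm:
  assumes "Im w \<noteq> 0" "Re w < 0"
    and "psd (smat (1 / of_real (Im w)) (mIm A))"
    and "psd (smat (1 / of_real (Im w)) (mIm (smat w A)))"
  shows "psd (mRe A)"
  unfolding mRe_eq_mIm_combination[OF assms(1)]
  using assms by (intro psd_add psd_smat_nonneg) auto

lemma isCont_matrixI:
  fixes F :: "'a::t2_space \<Rightarrow> 'b::topological_space^'n^'m"
  shows "(\<And>i j. isCont (\<lambda>z. F z $ i $ j) x) \<Longrightarrow> isCont F x"
  unfolding isCont_def by (intro vec_tendstoI)

lemma isCont_mRe_adj_mult: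
  "isCont \<Phi> x \<Longrightarrow> isCont \<Psi> x \<Longrightarrow> isCont (\<lambda>z. mRe (adj (\<Psi> z) ** \<Phi> z)) x"
  by (rule isCont_matrixI) (simp add: mRe_def smat_def adj_def matrix_matrix_mult_nth continuous_intros)

lemma mat_holomorphic_on_imp_isCont:
  fixes F :: "complex \<Rightarrow> complex^'n^'m"
  assumes "mat_holomorphic_on F S" "open S" "x \<in> S"
  shows "isCont F x"
proof (rule isCont_matrixI)
  fix i j
  have "continuous_on S (\<lambda>z. F z $ i $ j)"
    using assms(1) by (simp add: mat_holomorphic_on_def holomorphic_on_imp_continuous_on)
  then show "isCont (\<lambda>z. F z $ i $ j) x"
    using assms(2,3) continuous_on_eq_continuous_at by blast
qed

lemma open_slit: "open (slit \<alpha>)"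
proof -
  have "{complex_of_real t | t. t \<ge> \<alpha>} = \<real> \<inter> {z. Re z \<ge> \<alpha>}"
    by (auto elim!: Reals_cases)
  then show ?thesis
    unfolding slit_def by (metis open_Compl closed_Int closed_complex_Reals closed_halfspace_Re_ge)
qed

lemma islimpt_nonreal: "(x :: complex) islimpt - \<real>"
proof (rule islimpt_approachable[THEN iffD2], intro allI impI)
  fix e :: real assume "e > 0"
  define t where "t = (if Im x < 0 then - e / 2 else e / 2)"
  have "x + \<i> * of_real t \<in> - \<real> \<and> x + \<i> * of_real t \<noteq> x \<and> dist (x + \<i> * of_real t) x < e"
    using \<open>e > 0\<close> by (auto simp: t_def complex_is_Real_iff dist_norm norm_mult)
  then show "\<exists>x'\<in>- \<real>. x' \<noteq> x \<and> dist x' x < e" by blast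
qed

lemma psd_if_psd_at_nonreal:
  fixes F :: "complex \<Rightarrow> complex^'n^'n"
  assumes "isCont F x" "eventually (\<lambda>z. psd (F z)) (at x within - \<real>)"
  shows "psd (F x)"
proof -
  have "(F \<longlongrightarrow> F x) (at x within - \<real>)"
    using assms(1) continuous_at_imp_continuous_within continuous_within by blast
  moreover have "at x within - \<real> \<noteq> bot"
    using islimpt_nonreal trivial_limit_within by blast
  ultimately show ?thesis
    using Lim_in_closed_set[OF closed_psd, of F] assms(2) by simp
qed

lemma stieltjes_conds_open: "stieltjes_conds \<alpha> \<phi> \<psi> D \<Longrightarrow> open (slit \<alpha> - D)"
  by (simp add: stieltjes_conds_def discrete_in_def open_diff_sparse_pts open_slit)

lemma stieltjes_conds_psd_mIm:
  assumes "stieltjes_conds \<alpha> \<phi> \<psi> D" "z \<notin> \<real>" "z \<notin> D"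
  shows "psd (smat (1 / of_real (Im z)) (mIm (adj (\<psi> z) ** \<phi> z)))"
    and "psd (smat (1 / of_real (Im z)) (mIm (smat (z - of_real \<alpha>) (adj (\<psi> z) ** \<phi> z))))"
  using assms by (auto simp: stieltjes_conds_def adj_stack_Jmat_stack smat_smat matrix_mult_smat)

lemma stieltjes_conds_psd_mRe_nonreal:
  assumes "stieltjes_conds \<alpha> \<phi> \<psi> D" "z \<notin> \<real>" "z \<notin> D" "Re z < \<alpha>"
  shows "psd (mRe (adj (\<psi> z) ** \<phi> z))"
  using assms stieltjes_conds_psd_mIm[OF assms(1-3)]
  by (intro psd_mRe_if_psd_mIm[where w = "z - of_real \<alpha>"]) (auto simp: complex_is_Real_iff)

lemma stieltjes_conds_psd_mRe:
  assumes D: "stieltjes_conds \<alpha> \<phi> \<psi> D" and z: "Re z < \<alpha>" "z \<notin> D"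
  shows "psd (mRe (adj (\<psi> z) ** \<phi> z))"
proof (rule psd_if_psd_at_nonreal)
  have "z \<in> slit \<alpha> - D" "open (slit \<alpha> - D)"
    using z stieltjes_conds_open[OF D] by (auto simp: slit_def)
  then show "isCont (\<lambda>z. mRe (adj (\<psi> z) ** \<phi> z)) z"
    using D by (auto simp: stieltjes_conds_def intro!: isCont_mRe_adj_mult mat_holomorphic_on_imp_isCont)
  have "eventually (\<lambda>w. w \<in> (slit \<alpha> - D) \<inter> {w. Re w < \<alpha>}) (nhds z)"
    using \<open>z \<in> slit \<alpha> - D\<close> \<open>open (slit \<alpha> - D)\<close> z(1)
    by (intro eventually_nhds_in_open open_Int open_halfspace_Re_lt) auto
  then show "eventually (\<lambda>w. psd (mRe (adj (\<psi> w) ** \<phi> w))) (at z within - \<real>)"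
    unfolding eventually_at_filter
    by eventually_elim (auto intro: stieltjes_conds_psd_mRe_nonreal[OF D])
qed

theorem lemma10p13:
  fixes \<alpha> :: real and \<phi> \<psi> :: "complex \<Rightarrow> complex^'q^'q"
  assumes "stieltjes_pair \<alpha> \<phi> \<psi>"
  shows "\<exists>D. stieltjes_conds \<alpha> \<phi> \<psi> D \<and>
    (\<forall>z. z \<notin> \<real> \<and> z \<notin> D \<longrightarrow>
       psd (smat (1 / complex_of_real (Im z)) (mIm (adj (\<psi> z) ** \<phi> z)))) \<and>
    (\<forall>z. z \<notin> \<real> \<and> z \<notin> D \<longrightarrow>
       psd (smat (1 / complex_of_real (Im z))
              (mIm (smat (z - of_real \<alpha>) (adj (\<psi> z) ** \<phi> z))))) \<and>
    (\<forall>z. Re z < \<alpha> \<and> z \<notin> D \<longrightarrow> psd (mRe (adj (\<psi> z) ** \<phi> z)))"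
proof -
  obtain D where "stieltjes_conds \<alpha> \<phi> \<psi> D"
    using assms unfolding stieltjes_pair_def by blast
  then show ?thesis
    using stieltjes_conds_psd_mIm stieltjes_conds_psd_mRe by blast
qed

end
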